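(* Let $g:\mathbb Z\to[0,\infty)$ and $\mu\in\mathbb R$, and define $G=\sum_{k\in\mathbb Z}g(k)$ and $J=\sum_{k\in\mathbb Z}(k-\mu)^2g(k)$. If $0<G<\infty$ and $0<J<\infty$, then $$\sup_{k\in\mathbb Z}g(k)\ge\frac{3G^{3/2}}{16\sqrt J+4\sqrt G}.$$ *)

theory Defs
  imports "HOL-Analysis.Analysis"
begin

end

theory Submission
  imports Defs
begin

text \<open>
  A Chebyshev argument. Let \<open>M = sup g\<close>, \<open>G = \<Sum>g\<close>, \<open>J = \<Sum>(k - \<mu>)\<^sup>2 g(k)\<close>, and
  consider the window of integers \<open>k\<close> with \<open>\<bar>k - \<mu>\<bar> < R\<close>. Outside it, \<open>g(k) \<le> (k - \<mu>)\<^sup>2 g(k) / R\<^sup>2\<close>,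
  so the tail carries mass at most \<open>J / R\<^sup>2\<close>; the window contains at most \<open>2R + 1\<close> integers and
  so carries mass at most \<open>(2R + 1) M\<close>. Choosing \<open>R = 2 \<surd>(J / G)\<close> makes the tail at most \<open>G / 4\<close>,
  whence \<open>3G / 4 \<le> (4 \<surd>(J / G) + 1) M\<close>, which rearranges to the claim.
\<close>

lemma int_abs_diff_le_eq_interval:
  fixes \<mu> R :: real
  shows "{k::int. \<bar>real_of_int k - \<mu>\<bar> \<le> R} = {\<lceil>\<mu> - R\<rceil>..\<lfloor>\<mu> + R\<rfloor>}"
  by (auto simp: abs_le_iff ceiling_le_iff le_floor_iff)

lemma card_int_abs_diff_le:
  fixes \<mu> R :: real
  assumes "R \<ge> 0"
  shows "real (card {k::int. \<bar>real_of_int k - \<mu>\<bar> \<le> R}) \<le> 2 * R + 1"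
proof -
  have "real_of_int (\<lfloor>\<mu> + R\<rfloor> - \<lceil>\<mu> - R\<rceil> + 1) \<le> 2 * R + 1"
    using of_int_floor_le[of "\<mu> + R"] le_of_int_ceiling[of "\<mu> - R"] by linarith
  then show ?thesis
    using assms by (simp add: int_abs_diff_le_eq_interval)
qed

lemma infsum_Markov_inequality:
  fixes f w :: "'a \<Rightarrow> real"
  assumes f_nonneg: "\<And>x. x \<in> A \<Longrightarrow> f x \<ge> 0"
    and w_nonneg: "\<And>x. x \<in> A \<Longrightarrow> w x \<ge> 0"
    and summable: "(\<lambda>x. w x * f x) summable_on A"
    and "c > 0"
  shows "infsum f {x\<in>A. c \<le> w x} \<le> infsum (\<lambda>x. w x * f x) A / c"
proof -
  let ?T = "{x\<in>A. c \<le> w x}"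
  have bound: "f x \<le> w x * f x / c" if "x \<in> ?T" for x
    using that \<open>c > 0\<close> f_nonneg mult_right_mono[of c "w x" "f x"] by (simp add: field_simps)
  have "(\<lambda>x. w x * f x) summable_on ?T"
    by (rule summable_on_subset_banach[OF summable]) auto
  from summable_on_cmult_left[OF this, of "inverse c"]
  have weighted_T: "(\<lambda>x. w x * f x / c) summable_on ?T"
    by (simp add: divide_inverse)
  have "infsum f ?T \<le> infsum (\<lambda>x. w x * f x / c) ?T"
    using summable_on_comparison_test[OF weighted_T] bound f_nonneg
    by (intro infsum_mono weighted_T) auto
  also have "\<dots> = infsum (\<lambda>x. w x * f x) ?T / c"
    using infsum_cmult_left'[of "\<lambda>x. w x * f x" "inverse c"] by (simp add: divide_inverse)
  also have "infsum (\<lambda>x. w x * f x) ?T \<le> infsum (\<lambda>x. w x * f x) A"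
    using summable_on_subset_banach[OF summable] f_nonneg w_nonneg
    by (intro infsum_mono2 summable) auto
  then have "infsum (\<lambda>x. w x * f x) ?T / c \<le> infsum (\<lambda>x. w x * f x) A / c"
    using \<open>c > 0\<close> by (simp add: divide_right_mono)
  finally show ?thesis .
qed

lemma le_infsum_nonneg:
  fixes f :: "'a \<Rightarrow> real"
  assumes "f summable_on A" "\<And>x. x \<in> A \<Longrightarrow> f x \<ge> 0" "a \<in> A"
  shows "f a \<le> infsum f A"
  using finite_sum_le_infsum[of f A "{a}"] assms by simp

lemma infsum_int_le_window_plus_second_moment:
  fixes g :: "int \<Rightarrow> real" and \<mu> R M :: real
  assumes nonneg: "\<And>k. g k \<ge> 0"
    and bound: "\<And>k. g k \<le> M"
    and summable: "g summable_on UNIV"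
    and moment_summable: "(\<lambda>k. (real_of_int k - \<mu>)^2 * g k) summable_on UNIV"
    and "R > 0"
  shows "(\<Sum>\<^sub>\<infinity>k. g k) \<le> (2 * R + 1) * M + (\<Sum>\<^sub>\<infinity>k. (real_of_int k - \<mu>)^2 * g k) / R^2"
proof -
  define W where "W = {k::int. (real_of_int k - \<mu>)^2 < R^2}"
  define T where "T = {k::int. R^2 \<le> (real_of_int k - \<mu>)^2}"
  have W_sub: "W \<subseteq> {k. \<bar>real_of_int k - \<mu>\<bar> \<le> R}"
    unfolding W_def using \<open>R > 0\<close> by (auto simp: power2_le_iff_abs_le[symmetric])
  have "finite W"
    by (rule finite_subset[OF W_sub]) (simp add: int_abs_diff_le_eq_interval)
  have "M \<ge> 0"
    using nonneg[of 0] bound[of 0] by linarith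
  have "infsum g W = sum g W"
    using \<open>finite W\<close> by simp
  also have "\<dots> \<le> real (card W) * M"
    using sum_mono[of W g "\<lambda>_. M"] bound by simp
  also have "\<dots> \<le> (2 * R + 1) * M"
    using card_mono[OF _ W_sub] card_int_abs_diff_le[of R \<mu>] \<open>R > 0\<close> \<open>M \<ge> 0\<close>
    by (intro mult_right_mono) (auto simp: int_abs_diff_le_eq_interval)
  finally have window: "infsum g W \<le> (2 * R + 1) * M" .
  have tail: "infsum g T \<le> (\<Sum>\<^sub>\<infinity>k. (real_of_int k - \<mu>)^2 * g k) / R^2"
    using infsum_Markov_inequality[of UNIV g "\<lambda>k. (real_of_int k - \<mu>)^2" "R^2"]
      nonneg moment_summable \<open>R > 0\<close> by (simp add: T_def)
  have "(\<Sum>\<^sub>\<infinity>k. g k) = infsum g W + infsum g T"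
  proof -
    have "W \<inter> T = {}" "W \<union> T = UNIV"
      by (auto simp: W_def T_def)
    then show ?thesis
      using infsum_Un_disjoint[of g W T] summable_on_subset_banach[OF summable] by simp
  qed
  with window tail show ?thesis
    by linarith
qed

theorem lemma7:
  fixes g :: "int \<Rightarrow> real" and \<mu> :: real
  assumes nonneg: "\<And>k. g k \<ge> 0"
    and G_fin: "g summable_on UNIV"
    and G_pos: "(\<Sum>\<^sub>\<infinity>k. g k) > 0"
    and J_fin: "(\<lambda>k. (real_of_int k - \<mu>)^2 * g k) summable_on UNIV"
    and J_pos: "(\<Sum>\<^sub>\<infinity>k. (real_of_int k - \<mu>)^2 * g k) > 0"
  shows "(SUP k. g k) \<ge>
    3 * (\<Sum>\<^sub>\<infinity>k. g k) powr (3/2) /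
      (16 * sqrt (\<Sum>\<^sub>\<infinity>k. (real_of_int k - \<mu>)^2 * g k) + 4 * sqrt (\<Sum>\<^sub>\<infinity>k. g k))"
proof -
  define G where "G = (\<Sum>\<^sub>\<infinity>k. g k)"
  define J where "J = (\<Sum>\<^sub>\<infinity>k. (real_of_int k - \<mu>)^2 * g k)"
  define M where "M = (SUP k. g k)"
  define R where "R = 2 * sqrt J / sqrt G"
  have "G > 0" "J > 0" "R > 0"
    using G_pos J_pos by (auto simp: G_def J_def R_def)
  have "g k \<le> G" for k
    unfolding G_def using le_infsum_nonneg[OF G_fin] nonneg by simp
  then have g_le_M: "g k \<le> M" for k
    unfolding M_def by (intro cSUP_upper bdd_aboveI2) auto
  have "G \<le> (2 * R + 1) * M + J / R^2"
    unfolding G_def J_def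
    by (rule infsum_int_le_window_plus_second_moment[OF nonneg g_le_M G_fin J_fin \<open>R > 0\<close>])
  moreover have "J / R^2 = G / 4"
    using \<open>G > 0\<close> \<open>J > 0\<close> by (simp add: R_def power_divide)
  ultimately have "3 * G / 4 \<le> (2 * R + 1) * M"
    by linarith
  from mult_left_mono[OF this, of "4 * sqrt G"]
  have "3 * G * sqrt G \<le> sqrt G * (2 * R + 1) * 4 * M"
    using \<open>G > 0\<close> by (simp add: algebra_simps)
  also have "sqrt G * (2 * R + 1) = 4 * sqrt J + sqrt G"
    using \<open>G > 0\<close> by (simp add: R_def field_simps)
  finally have "3 * G * sqrt G \<le> (16 * sqrt J + 4 * sqrt G) * M"
    by (simp add: algebra_simps)
  moreover have "G powr (3/2) = G * sqrt G"
    using powr_add[of G 1 "1/2"] \<open>G > 0\<close> by (simp add: powr_half_sqrt)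
  moreover have "16 * sqrt J + 4 * sqrt G > 0"
    using \<open>G > 0\<close> \<open>J > 0\<close> by (simp add: add_pos_pos)
  ultimately have "3 * G powr (3/2) / (16 * sqrt J + 4 * sqrt G) \<le> M"
    by (simp add: pos_divide_le_eq mult_ac)
  then show ?thesis
    unfolding G_def J_def M_def .
qed

end
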